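(* Let $A,B\subseteq\Sigma^+$ be such that either (1) there are $a\in A$ and $b_1,b_2\in B$ with $b_1\sqsubseteq a$ and $a\sqsubseteq b_2$, or (2) there are $a_1,a_2\in A$ and $b\in B$ with $a_1\sqsubseteq b$ and $b\sqsubseteq a_2$. Then in every deduction tree of $\langle A,B\rangle$, the rule applied at the root is neither Future nor Globally.
   Context: Let $AP$ be a finite set of atomic propositions and $\Sigma=2^{AP}$. For $\sigma=w_0\cdots w_m\in\Sigma^+$ and $j\le m$, $\sigma^{(j)}=w_j\cdots w_m$; $\sigma_1\sqsubseteq\sigma_2$ means $\sigma_1=\sigma_2^{(j)}$ for some position $j$ of $\sigma_2$ (i.e. $\sigma_1$ is a suffix of $\sigma_2$). For $A\subseteq\Sigma^+$: $A^{\mathsf X}=\{\sigma^{(1)}:\sigma\in A,|\sigma|\ge2\}$; $A^{\mathsf G}=\{\sigma^{(j)}:\sigma\in A,0\le j<|\sigma|\}$; a future point for $A$ is $f:A\to\mathbb N$ with $f(\sigma)<|\sigma|$, and $A^f=\{\sigma^{(f(\sigma))}:\sigma\in A\}$. For a literal $\alpha\in\{p,\neg p:p\in AP\}$, $A\models\alpha$ means $\alpha$ holds at position $0$ of every trace in $A$; $B\perp\alpha$ means it fails at position $0$ of every trace in $B$. Proof system on terms $\langle A,B\rangle$: Atomic: $\langle A,B\rangle$ if $A\models\alpha$, $B\perp\alpha$ for a literal $\alpha$; Or: $\langle A_1\uplus A_2,B\rangle$ from $\langle A_1,B\rangle,\langle A_2,B\rangle$; And: $\langle A,B_1\uplus B_2\rangle$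 from $\langle A,B_1\rangle,\langle A,B_2\rangle$; Next: $\langle A,B\rangle$ from $\langle A^{\mathsf X},B^{\mathsf X}\rangle$ if $|A^{\mathsf X}|=|A|$; WeakNext: $\langle A,B\rangle$ from $\langle A^{\mathsf X},B^{\mathsf X}\rangle$ if $|B^{\mathsf X}|=|B|$; Future: $\langle A,B\rangle$ from $\langle A^f,B^{\mathsf G}\rangle$, $f$ a future point for $A$; Globally: $\langle A,B\rangle$ from $\langle A^{\mathsf G},B^f\rangle$, $f$ a future point for $B$ ($\uplus$ = disjoint union). A deduction tree for $\langle A,B\rangle$ is a finite tree of rule applications rooted at $\langle A,B\rangle$ with all hypotheses derived. *)

theory Defs
  imports Main
begin

(* Traces over Sigma = 2^AP are nonempty lists of sets of atomic propositions;
   AP is a finite type.  Nonemptiness (Sigma^+) is imposed in the theorem. *)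
type_synonym 'ap trace = "'ap set list"

(* sigma^(j) = drop j sigma;  s1 \<sqsubseteq> s2 : s1 is a suffix of s2 at some position *)
definition suffix_of :: "'ap trace \<Rightarrow> 'ap trace \<Rightarrow> bool" where
  "suffix_of s1 s2 \<longleftrightarrow> (\<exists>j < length s2. s1 = drop j s2)"

definition nextset :: "'ap trace set \<Rightarrow> 'ap trace set" where
  "nextset A = {drop 1 s | s. s \<in> A \<and> length s \<ge> 2}"

definition globset :: "'ap trace set \<Rightarrow> 'ap trace set" where
  "globset A = {drop j s | s j. s \<in> A \<and> j < length s}"

definition future_point :: "('ap trace \<Rightarrow> nat) \<Rightarrow> 'ap trace set \<Rightarrow> bool" where
  "future_point f A \<longleftrightarrow> (\<forall>s\<in>A. f s < length s)"

definition fset_at :: "'ap trace set \<Rightarrow> ('ap trace \<Rightarrow> nat) \<Rightarrow> 'ap trace set" where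
  "fset_at A f = (\<lambda>s. drop (f s) s) ` A"

datatype 'ap literal = Pos 'ap | Neg 'ap

fun lit_holds :: "'ap literal \<Rightarrow> 'ap set \<Rightarrow> bool" where
  "lit_holds (Pos p) w = (p \<in> w)"
| "lit_holds (Neg p) w = (p \<notin> w)"

definition models_lit :: "'ap trace set \<Rightarrow> 'ap literal \<Rightarrow> bool" where
  "models_lit A \<alpha> \<longleftrightarrow> (\<forall>s\<in>A. lit_holds \<alpha> (s ! 0))"

definition perp_lit :: "'ap trace set \<Rightarrow> 'ap literal \<Rightarrow> bool" where
  "perp_lit B \<alpha> \<longleftrightarrow> (\<forall>s\<in>B. \<not> lit_holds \<alpha> (s ! 0))"

datatype 'ap dtree =
    AtomicR "'ap trace set" "'ap trace set" "'ap literal"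
  | OrR "'ap trace set" "'ap trace set" "'ap dtree" "'ap dtree"
  | AndR "'ap trace set" "'ap trace set" "'ap dtree" "'ap dtree"
  | NextR "'ap trace set" "'ap trace set" "'ap dtree"
  | WeakNextR "'ap trace set" "'ap trace set" "'ap dtree"
  | FutureR "'ap trace set" "'ap trace set" "'ap trace \<Rightarrow> nat" "'ap dtree"
  | GloballyR "'ap trace set" "'ap trace set" "'ap trace \<Rightarrow> nat" "'ap dtree"

fun concl :: "'ap dtree \<Rightarrow> 'ap trace set \<times> 'ap trace set" where
  "concl (AtomicR A B _) = (A, B)"
| "concl (OrR A B _ _) = (A, B)"
| "concl (AndR A B _ _) = (A, B)"
| "concl (NextR A B _) = (A, B)"
| "concl (WeakNextR A B _) = (A, B)"
| "concl (FutureR A B _ _) = (A, B)"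
| "concl (GloballyR A B _ _) = (A, B)"

fun valid_tree :: "'ap dtree \<Rightarrow> bool" where
  "valid_tree (AtomicR A B \<alpha>) = (models_lit A \<alpha> \<and> perp_lit B \<alpha>)"
| "valid_tree (OrR A B t1 t2) =
     ((\<exists>A1 A2. concl t1 = (A1, B) \<and> concl t2 = (A2, B) \<and> A1 \<inter> A2 = {} \<and> A = A1 \<union> A2)
      \<and> valid_tree t1 \<and> valid_tree t2)"
| "valid_tree (AndR A B t1 t2) =
     ((\<exists>B1 B2. concl t1 = (A, B1) \<and> concl t2 = (A, B2) \<and> B1 \<inter> B2 = {} \<and> B = B1 \<union> B2)
      \<and> valid_tree t1 \<and> valid_tree t2)"
| "valid_tree (NextR A B t) =
     (concl t = (nextset A, nextset B) \<and> card (nextset A) = card A \<and> valid_tree t)"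
| "valid_tree (WeakNextR A B t) =
     (concl t = (nextset A, nextset B) \<and> card (nextset B) = card B \<and> valid_tree t)"
| "valid_tree (FutureR A B f t) =
     (future_point f A \<and> concl t = (fset_at A f, globset B) \<and> valid_tree t)"
| "valid_tree (GloballyR A B f t) =
     (future_point f B \<and> concl t = (globset A, fset_at B f) \<and> valid_tree t)"

datatype rule_name = Atomic | Or | And | Next | WeakNext | Future | Globally

fun root_rule :: "'ap dtree \<Rightarrow> rule_name" where
  "root_rule (AtomicR _ _ _) = Atomic"
| "root_rule (OrR _ _ _ _) = Or"
| "root_rule (AndR _ _ _ _) = And"
| "root_rule (NextR _ _ _) = Next"
| "root_rule (WeakNextR _ _ _) = WeakNext"
| "root_rule (FutureR _ _ _ _) = Future"
| "root_rule (GloballyR _ _ _ _) = Globally"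

end

theory Submission
  imports Defs
begin

text \<open>Every derivable term \<open>\<langle>A, B\<rangle>\<close> with finite \<open>A, B\<close> has \<open>A \<inter> B = {}\<close>: Atomic separates
  \<open>A\<close> from \<open>B\<close> by a literal, and every other rule carries a common trace of its conclusion to a
  common trace of one of its premises (for Next and WeakNext the cardinality side condition
  rules out traces of length 1). If Future were applied at the root, a trace \<open>a \<in> A\<close> that is a
  suffix of some \<open>b \<in> B\<close> would put \<open>drop (f a) a\<close> into both \<open>A\<^sup>f\<close> and \<open>B\<^sup>G\<close>, making the
  premise underivable; Globally is symmetric.\<close>

lemma drop_in_globset: "s \<in> A \<Longrightarrow> j < length s \<Longrightarrow> drop j s \<in> globset A"
  unfolding globset_def by blast

lemma drop_in_fset_at: "s \<in> A \<Longrightarrow> drop (f s) s \<in> fset_at A f"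
  unfolding fset_at_def by blast

lemma drop_one_in_nextset: "s \<in> A \<Longrightarrow> 2 \<le> length s \<Longrightarrow> drop 1 s \<in> nextset A"
  unfolding nextset_def by blast

lemma nextset_eq_image: "nextset A = drop 1 ` {s \<in> A. 2 \<le> length s}"
  unfolding nextset_def by auto

lemma finite_nextset [simp]: "finite A \<Longrightarrow> finite (nextset A)"
  by (simp add: nextset_eq_image)

lemma finite_globset [simp]:
  assumes "finite A"
  shows "finite (globset A)"
proof -
  have "globset A = (\<Union>s\<in>A. (\<lambda>j. drop j s) ` {..<length s})"
    unfolding globset_def by auto
  with assms show ?thesis by simp
qed

lemma finite_fset_at [simp]: "finite A \<Longrightarrow> finite (fset_at A f)"
  unfolding fset_at_def by simp

lemma length_ge_2_if_card_nextset_eq: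
  assumes "finite A" "card (nextset A) = card A" "s \<in> A"
  shows "2 \<le> length s"
proof (rule ccontr)
  assume short: "\<not> 2 \<le> length s"
  have "card (nextset A) \<le> card {s \<in> A. 2 \<le> length s}"
    unfolding nextset_eq_image using assms(1) by (simp add: card_image_le)
  also have "\<dots> < card A"
    using assms(1,3) short by (intro psubset_card_mono) auto
  finally show False using assms(2) by simp
qed

lemma drop_suffix_in_globset:
  assumes "suffix_of x y" "y \<in> B" "k < length x"
  shows "drop k x \<in> globset B"
proof -
  obtain j where "j < length y" "x = drop j y"
    using assms(1) unfolding suffix_of_def by blast
  then have "drop k x = drop (k + j) y" "k + j < length y"
    using assms(3) by (auto simp: add.commute)
  then show ?thesis using assms(2) by (simp add: drop_in_globset)
qed

lemma valid_tree_disjoint: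
  "valid_tree T \<Longrightarrow> concl T = (A, B) \<Longrightarrow> finite A \<Longrightarrow> finite B \<Longrightarrow> A \<inter> B = {}"
proof (induction T arbitrary: A B)
  case AtomicR
  then show ?case by (auto simp: models_lit_def perp_lit_def)
next
  case OrR
  then show ?case by fastforce
next
  case AndR
  then show ?case by fastforce
next
  case (NextR A' B' t)
  have "s \<notin> B" if "s \<in> A" for s
  proof
    assume "s \<in> B"
    have "2 \<le> length s"
      using NextR.prems \<open>s \<in> A\<close> by (auto intro: length_ge_2_if_card_nextset_eq)
    then have "drop 1 s \<in> nextset A \<inter> nextset B"
      using \<open>s \<in> A\<close> \<open>s \<in> B\<close> drop_one_in_nextset by blast
    with NextR show False by auto
  qed
  then show ?case by blast
next
  case (WeakNextR A' B' t)
  have "s \<notin> A" if "s \<in> B" for s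
  proof
    assume "s \<in> A"
    have "2 \<le> length s"
      using WeakNextR.prems \<open>s \<in> B\<close> by (auto intro: length_ge_2_if_card_nextset_eq)
    then have "drop 1 s \<in> nextset A \<inter> nextset B"
      using \<open>s \<in> A\<close> \<open>s \<in> B\<close> drop_one_in_nextset by blast
    with WeakNextR show False by auto
  qed
  then show ?case by blast
next
  case (FutureR A' B' f t)
  have "s \<notin> B" if "s \<in> A" for s
  proof
    assume "s \<in> B"
    have "f s < length s"
      using FutureR.prems \<open>s \<in> A\<close> by (auto simp: future_point_def)
    then have "drop (f s) s \<in> fset_at A f \<inter> globset B"
      using \<open>s \<in> A\<close> \<open>s \<in> B\<close> by (simp add: drop_in_fset_at drop_in_globset)
    with FutureR show False by auto
  qed
  then show ?case by blast
next
  case (GloballyR A' B' f t)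
  have "s \<notin> A" if "s \<in> B" for s
  proof
    assume "s \<in> A"
    have "f s < length s"
      using GloballyR.prems \<open>s \<in> B\<close> by (auto simp: future_point_def)
    then have "drop (f s) s \<in> globset A \<inter> fset_at B f"
      using \<open>s \<in> A\<close> \<open>s \<in> B\<close> by (simp add: drop_in_fset_at drop_in_globset)
    with GloballyR show False by auto
  qed
  then show ?case by blast
qed

theorem lemma12:
  fixes A B :: "('ap::finite) trace set" and T :: "'ap dtree"
  assumes "finite A" and "finite B"
    and "\<forall>s\<in>A. s \<noteq> []" and "\<forall>s\<in>B. s \<noteq> []"
    and "(\<exists>a\<in>A. \<exists>b1\<in>B. \<exists>b2\<in>B. suffix_of b1 a \<and> suffix_of a b2)
         \<or> (\<exists>a1\<in>A. \<exists>a2\<in>A. \<exists>b\<in>B. suffix_of a1 b \<and> suffix_of b a2)"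
    and "valid_tree T" and "concl T = (A, B)"
  shows "root_rule T \<noteq> Future \<and> root_rule T \<noteq> Globally"
proof (cases T)
  case (FutureR _ _ f t)
  with assms have f: "future_point f A" and t: "valid_tree t" "concl t = (fset_at A f, globset B)"
    by auto
  obtain a b where "a \<in> A" "b \<in> B" "suffix_of a b"
    using assms(5) by blast
  with f have "drop (f a) a \<in> fset_at A f \<inter> globset B"
    by (auto simp: future_point_def intro: drop_in_fset_at drop_suffix_in_globset)
  with valid_tree_disjoint[OF t] assms(1,2) show ?thesis by simp
next
  case (GloballyR _ _ f t)
  with assms have f: "future_point f B" and t: "valid_tree t" "concl t = (globset A, fset_at B f)"
    by auto
  obtain a b where "a \<in> A" "b \<in> B" "suffix_of b a"
    using assms(5) by blast
  with f have "drop (f b) b \<in> globset A \<inter> fset_at B f"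
    by (auto simp: future_point_def intro: drop_in_fset_at drop_suffix_in_globset)
  with valid_tree_disjoint[OF t] assms(1,2) show ?thesis by simp
qed simp_all

end
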